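(* In the setting below, for every risk model $c$ on the sample, $$1\;\ge\;\mathrm{AUROC}\;\ge\;\max\Big\{\min_{1\le k\le M}B_k(\mathrm{AUNBC};a_0),\,0\Big\},$$ where for $k=1,\dots,M$ the function $B_k(\cdot;a_0)$, defined for $y\in[a_0p_1-(1-a_0)P_M,\;a_0]$, is $$B_k(y;a_0)=\begin{cases}1-\frac{a_0-y-(1-a_0)P_k}{a_0(1-p_k)}, & \text{if } y\le a_0-2(1-a_0)P_k,\\[2pt] 1-\frac{(a_0-y)^2}{4P_k(1-p_k)a_0(1-a_0)}, & \text{otherwise}.\end{cases}$$
   Context: Let $0=p_0<p_1<\cdots<p_M<p_{M+1}=1$ with $M\ge1$, and let a labelled sample $\{(\bm x_j,y_j)\}_{j=1}^N$, $y_j\in\{0,1\}$, contain $N^+\ge1$ positive and $N^-\ge1$ negative samples; $a_0=N^+/N$. For $k=1,\dots,M$, $P_k=\sum_{i=1}^k\frac{(p_{i+1}-p_i)p_i}{1-p_i}$. A risk model is any function $c$ assigning to each sample a value $c(\bm x_j)\in[0,1]$. For $i=0,\dots,M$, $\mathrm{TP}_i=\#\{j:c(\bm x_j)\ge p_i,\ y_j=1\}$, $\mathrm{FP}_i=\#\{j:c(\bm x_j)\ge p_i,\ y_j=0\}$, and $\mathrm{TP}_{M+1}=\mathrm{FP}_{M+1}=0$. $\mathrm{AUROC}=\frac{1}{N^+N^-}\sum_{i=0}^M(\mathrm{FP}_i-\mathrm{FP}_{i+1})\mathrm{TP}_i$ and $\mathrm{AUNBC}=\frac1N\sum_{i=0}^M(p_{i+1}-p_i)\big(\mathrm{TP}_i-\mathrm{FP}_i\frac{p_i}{1-p_i}\big)$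 (one has $a_0p_1-(1-a_0)P_M\le\mathrm{AUNBC}\le a_0$). *)

theory Defs
  imports Complex_Main
begin

text \<open>Samples are indexed by j < N; sample j has features x j, label y j (0 or 1),
  and the risk model c gives it the score c (x j).\<close>

definition npos :: "nat \<Rightarrow> (nat \<Rightarrow> nat) \<Rightarrow> nat" where
  "npos N y = card {j. j < N \<and> y j = 1}"

definition nneg :: "nat \<Rightarrow> (nat \<Rightarrow> nat) \<Rightarrow> nat" where
  "nneg N y = card {j. j < N \<and> y j = 0}"

definition a0 :: "nat \<Rightarrow> (nat \<Rightarrow> nat) \<Rightarrow> real" where
  "a0 N y = real (npos N y) / real N"

definition TP :: "nat \<Rightarrow> (nat \<Rightarrow> real) \<Rightarrow> ('a \<Rightarrow> real) \<Rightarrow> (nat \<Rightarrow> 'a) \<Rightarrow> (nat \<Rightarrow> nat) \<Rightarrow> nat \<Rightarrow> nat \<Rightarrow> real" where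
  "TP M p c x y N i = (if i = M + 1 then 0
     else real (card {j. j < N \<and> c (x j) \<ge> p i \<and> y j = 1}))"

definition FP :: "nat \<Rightarrow> (nat \<Rightarrow> real) \<Rightarrow> ('a \<Rightarrow> real) \<Rightarrow> (nat \<Rightarrow> 'a) \<Rightarrow> (nat \<Rightarrow> nat) \<Rightarrow> nat \<Rightarrow> nat \<Rightarrow> real" where
  "FP M p c x y N i = (if i = M + 1 then 0
     else real (card {j. j < N \<and> c (x j) \<ge> p i \<and> y j = 0}))"

definition PP :: "(nat \<Rightarrow> real) \<Rightarrow> nat \<Rightarrow> real" where
  "PP p k = (\<Sum>i = 1..k. (p (i + 1) - p i) * p i / (1 - p i))"

definition AUROC :: "nat \<Rightarrow> (nat \<Rightarrow> real) \<Rightarrow> ('a \<Rightarrow> real) \<Rightarrow> (nat \<Rightarrow> 'a) \<Rightarrow> (nat \<Rightarrow> nat) \<Rightarrow> nat \<Rightarrow> real" where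
  "AUROC M p c x y N = 1 / (real (npos N y) * real (nneg N y)) *
     (\<Sum>i = 0..M. (FP M p c x y N i - FP M p c x y N (i + 1)) * TP M p c x y N i)"

definition AUNBC :: "nat \<Rightarrow> (nat \<Rightarrow> real) \<Rightarrow> ('a \<Rightarrow> real) \<Rightarrow> (nat \<Rightarrow> 'a) \<Rightarrow> (nat \<Rightarrow> nat) \<Rightarrow> nat \<Rightarrow> real" where
  "AUNBC M p c x y N = 1 / real N *
     (\<Sum>i = 0..M. (p (i + 1) - p i) *
        (TP M p c x y N i - FP M p c x y N i * p i / (1 - p i)))"

text \<open>B_k(y; a0); the paper only uses it on [a0 p_1 - (1 - a0) P_M, a0], where AUNBC lies.\<close>
definition Bk :: "(nat \<Rightarrow> real) \<Rightarrow> nat \<Rightarrow> real \<Rightarrow> real \<Rightarrow> real" where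
  "Bk p k v a = (if v \<le> a - 2 * (1 - a) * PP p k
     then 1 - (a - v - (1 - a) * PP p k) / (a * (1 - p k))
     else 1 - (a - v)^2 / (4 * PP p k * (1 - p k) * a * (1 - a)))"

end

theory Submission
  imports Defs
begin

text \<open>
Write T_i, F_i for TP_i, FP_i. Summation by parts turns N^+ N^- (1 - AUROC) into the number
\<Sum>_k F_k (T_(k-1) - T_k) of misranked (positive, negative) pairs, and N (a_0 - AUNBC)
into S + Q with S = \<Sum>_k (1 - p_k) (T_(k-1) - T_k) and
Q = \<Sum>_i (p_(i+1) - p_i) F_i p_i / (1 - p_i).
If k maximises F_k / (1 - p_k), there are at most F_k S / (1 - p_k) misranked pairs, and
Q \<ge> F_k P_k because F is nonincreasing. With u = S / (N^+ (1 - p_k)) and f = F_k / N^-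
this reads 1 - AUROC \<le> u f, where 0 \<le> f \<le> 1 and
a_0 (1 - p_k) u + (1 - a_0) P_k f \<le> a_0 - AUNBC; the largest value of u f under this
linear constraint is 1 - B_k(AUNBC; a_0).
\<close>

lemma sum_diff_mult_by_parts:
  fixes g v :: "nat \<Rightarrow> 'a::comm_ring"
  shows "(\<Sum>i=0..M. (g i - g (i + 1)) * v i) =
    g 0 * v 0 - g (M + 1) * v M - (\<Sum>k=1..M. g k * (v (k - 1) - v k))"
  by (induction M) (auto simp: algebra_simps)

text \<open>For D \<ge> 0 this is the maximum of u f over u \<ge> 0, 0 \<le> f \<le> 1, \<alpha> u + \<beta> f \<le> D,
  attained at f = 1 if D \<ge> 2 \<beta> and at f = D / (2 \<beta>) otherwise.\<close>

definition product_bound :: "real \<Rightarrow> real \<Rightarrow> real \<Rightarrow> real" where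
  "product_bound \<alpha> \<beta> D = (if 2 * \<beta> \<le> D then (D - \<beta>) / \<alpha> else D\<^sup>2 / (4 * \<alpha> * \<beta>))"

lemma mult_le_product_bound:
  fixes \<alpha> \<beta> u f D :: real
  assumes "0 < \<alpha>" "0 < \<beta>" "0 \<le> u" "0 \<le> f" "f \<le> 1"
    and "\<alpha> * u + \<beta> * f \<le> D"
  shows "u * f \<le> product_bound \<alpha> \<beta> D"
proof -
  have "\<alpha> * (u * f) = f * (\<alpha> * u)" by simp
  also have "\<dots> \<le> f * (D - \<beta> * f)"
    using assms by (intro mult_left_mono) auto
  finally have bound: "\<alpha> * (u * f) \<le> f * (D - \<beta> * f)" .
  show ?thesis
  proof (cases "2 * \<beta> \<le> D")
    case True
    have "\<beta> * f \<le> \<beta>"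
      using assms by (simp add: mult_left_le)
    with True have "0 \<le> D - \<beta> - \<beta> * f"
      by linarith
    then have "0 \<le> (1 - f) * (D - \<beta> - \<beta> * f)"
      using assms by simp
    moreover have "f * (D - \<beta> * f) = (D - \<beta>) - (1 - f) * (D - \<beta> - \<beta> * f)"
      by (simp add: algebra_simps)
    ultimately have "f * (D - \<beta> * f) \<le> D - \<beta>" by linarith
    then show ?thesis
      using True bound assms by (simp add: product_bound_def pos_le_divide_eq mult.commute)
  next
    case False
    have "4 * \<beta> * (f * (D - \<beta> * f)) = D\<^sup>2 - (D - 2 * \<beta> * f)\<^sup>2"
      by (simp add: power2_eq_square algebra_simps)
    also have "\<dots> \<le> D\<^sup>2" by simp
    finally have "4 * \<beta> * (\<alpha> * (u * f)) \<le> D\<^sup>2"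
      using bound assms by (smt (verit) mult_left_mono)
    then show ?thesis
      using False assms by (simp add: product_bound_def pos_le_divide_eq mult_ac)
  qed
qed

lemma Bk_eq_product_bound:
  "Bk p k v a = 1 - product_bound (a * (1 - p k)) ((1 - a) * PP p k) (a - v)"
  by (auto simp: Bk_def product_bound_def algebra_simps)

lemma sum_mult_le_max_ratio:
  fixes f w d :: "'a \<Rightarrow> real"
  assumes "finite K" "K \<noteq> {}"
    and w_pos: "\<And>i. i \<in> K \<Longrightarrow> 0 < w i" and d_nonneg: "\<And>i. i \<in> K \<Longrightarrow> 0 \<le> d i"
  obtains k where "k \<in> K" "(\<Sum>i\<in>K. f i * d i) \<le> f k / w k * (\<Sum>i\<in>K. w i * d i)"
proof -
  let ?r = "\<lambda>i. f i / w i"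
  have "Max (?r ` K) \<in> ?r ` K"
    using assms(1,2) by (intro Max_in) auto
  then obtain k where k: "k \<in> K" and r_k: "Max (?r ` K) = ?r k"
    by blast
  have "f i * d i \<le> ?r k * w i * d i" if "i \<in> K" for i
  proof -
    have "?r i \<le> ?r k"
      unfolding r_k[symmetric] using that assms(1) by simp
    then have "f i \<le> ?r k * w i"
      using w_pos[OF that] by (simp add: divide_le_eq)
    then show ?thesis
      using d_nonneg[OF that] by (rule mult_right_mono)
  qed
  then have "(\<Sum>i\<in>K. f i * d i) \<le> ?r k * (\<Sum>i\<in>K. w i * d i)"
    by (simp add: sum_distrib_left mult.assoc sum_mono)
  with k show thesis by (rule that)
qed

locale threshold_grid =
  fixes M :: nat and p :: "nat \<Rightarrow> real"
  assumes p_0: "p 0 = 0" and p_last: "p (M + 1) = 1"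
    and p_step: "\<And>i. i \<le> M \<Longrightarrow> p i < p (i + 1)"
begin

lemma p_mono:
  assumes "i \<le> k" "k \<le> M + 1"
  shows "p i \<le> p k"
proof (rule lift_Suc_mono_le_ivl[of "{..M}"])
  show "p n \<le> p (Suc n)" if "n \<in> {..M}" for n
    using p_step[of n] that by simp
qed (use assms in auto)

lemma p_pos: "1 \<le> i \<Longrightarrow> i \<le> M + 1 \<Longrightarrow> 0 < p i"
  using p_step[of 0] p_mono[of 1 i] p_0 by simp

lemma p_nonneg: "i \<le> M + 1 \<Longrightarrow> 0 \<le> p i"
  using p_mono[of 0 i] p_0 by simp

lemma p_less_1: "i \<le> M \<Longrightarrow> p i < 1"
  using p_mono[of i M] p_step[of M] p_last by simp

lemma PP_pos: "1 \<le> k \<Longrightarrow> k \<le> M \<Longrightarrow> 0 < PP p k"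
  unfolding PP_def
  using p_step p_pos p_less_1 by (intro sum_pos divide_pos_pos mult_pos_pos) auto

lemma TP_antimono:
  "i \<le> k \<Longrightarrow> k \<le> M + 1 \<Longrightarrow> TP M p c x y N k \<le> TP M p c x y N i"
  using p_mono[of i k] by (auto simp: TP_def intro!: card_mono)

lemma FP_antimono:
  "i \<le> k \<Longrightarrow> k \<le> M + 1 \<Longrightarrow> FP M p c x y N k \<le> FP M p c x y N i"
  using p_mono[of i k] by (auto simp: FP_def intro!: card_mono)

end

lemma TP_0:
  assumes "p 0 = 0" "\<And>j. j < N \<Longrightarrow> 0 \<le> c (x j)"
  shows "TP M p c x y N 0 = npos N y"
  using assms unfolding TP_def npos_def by (auto intro!: arg_cong[where f = card])

lemma FP_0:
  assumes "p 0 = 0" "\<And>j. j < N \<Longrightarrow> 0 \<le> c (x j)"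
  shows "FP M p c x y N 0 = nneg N y"
  using assms unfolding FP_def nneg_def by (auto intro!: arg_cong[where f = card])

lemma npos_add_nneg:
  fixes N :: nat and y :: "nat \<Rightarrow> nat"
  assumes "\<And>j. j < N \<Longrightarrow> y j \<in> {0, 1}"
  shows "npos N y + nneg N y = N"
proof -
  have "N = card {..<N}"
    by simp
  also have "{..<N} = {j. j < N \<and> y j = 1} \<union> {j. j < N \<and> y j = 0}"
    using assms by (auto; force)
  also have "card \<dots> = npos N y + nneg N y"
    unfolding npos_def nneg_def by (rule card_Un_disjoint) auto
  finally show ?thesis by simp
qed

text \<open>T, F, np, nn stand for TP, FP, N^+, N^- (so that N = np + nn).\<close>

locale roc_counts = threshold_grid +
  fixes T F :: "nat \<Rightarrow> real" and np nn :: real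
  assumes np_pos: "0 < np" and nn_pos: "0 < nn"
    and T_0: "T 0 = np" and F_0: "F 0 = nn" and F_last: "F (M + 1) = 0"
    and T_nonneg: "\<And>i. 0 \<le> T i" and F_nonneg: "\<And>i. 0 \<le> F i"
    and T_antimono: "\<And>i k. i \<le> k \<Longrightarrow> k \<le> M + 1 \<Longrightarrow> T k \<le> T i"
    and F_antimono: "\<And>i k. i \<le> k \<Longrightarrow> k \<le> M + 1 \<Longrightarrow> F k \<le> F i"
begin

definition auroc :: real where
  "auroc = 1 / (np * nn) * (\<Sum>i = 0..M. (F i - F (i + 1)) * T i)"

definition aunbc :: real where
  "aunbc = 1 / (np + nn) *
     (\<Sum>i = 0..M. (p (i + 1) - p i) * (T i - F i * p i / (1 - p i)))"

definition misranked_pairs :: real where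
  "misranked_pairs = (\<Sum>k = 1..M. F k * (T (k - 1) - T k))"

definition tp_loss :: real where
  "tp_loss = (\<Sum>k = 1..M. (1 - p k) * (T (k - 1) - T k))"

definition fp_penalty :: real where
  "fp_penalty = (\<Sum>i = 0..M. (p (i + 1) - p i) * (F i * p i / (1 - p i)))"

lemma T_decrement_nonneg: "1 \<le> k \<Longrightarrow> k \<le> M + 1 \<Longrightarrow> 0 \<le> T (k - 1) - T k"
  using T_antimono[of "k - 1" k] by simp

lemma auroc_eq: "auroc = 1 - misranked_pairs / (np * nn)"
  using sum_diff_mult_by_parts[of F T M] F_0 T_0 F_last np_pos nn_pos
  by (simp add: auroc_def misranked_pairs_def field_simps)

lemma misranked_pairs_nonneg: "0 \<le> misranked_pairs"
  unfolding misranked_pairs_def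
  using F_nonneg T_decrement_nonneg by (intro sum_nonneg mult_nonneg_nonneg) auto

lemma misranked_pairs_le: "misranked_pairs \<le> np * nn"
proof -
  have "misranked_pairs \<le> (\<Sum>k = 1..M. nn * (T (k - 1) - T k))"
    unfolding misranked_pairs_def using F_antimono[of 0] F_0 T_decrement_nonneg
    by (intro sum_mono mult_right_mono) auto
  also have "\<dots> = nn * (np - T M)"
    using sum_diff_mult_by_parts[of "\<lambda>_. 1" T M] T_0 by (simp add: sum_distrib_left)
  also have "\<dots> \<le> np * nn"
    using T_nonneg[of M] nn_pos by (simp add: algebra_simps)
  finally show ?thesis .
qed

lemma auroc_bounds: "0 \<le> auroc" "auroc \<le> 1"
  using misranked_pairs_nonneg misranked_pairs_le np_pos nn_pos
  by (auto simp: auroc_eq divide_le_eq)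

lemma aunbc_eq: "aunbc = (np - tp_loss - fp_penalty) / (np + nn)"
proof -
  have "(\<Sum>i = 0..M. (p (i + 1) - p i) * T i) = np - tp_loss"
    using sum_diff_mult_by_parts[of "\<lambda>i. 1 - p i" T M] p_0 p_last T_0
    by (simp add: tp_loss_def)
  then show ?thesis
    by (simp add: aunbc_def fp_penalty_def right_diff_distrib sum_subtractf diff_divide_distrib)
qed

lemma tp_loss_nonneg: "0 \<le> tp_loss"
  unfolding tp_loss_def
  using p_less_1 T_decrement_nonneg
  by (intro sum_nonneg mult_nonneg_nonneg) (auto simp: less_imp_le)

lemma fp_penalty_ge:
  assumes k: "k \<in> {1..M}"
  shows "F k * PP p k \<le> fp_penalty"
proof -
  have "F k * PP p k = (\<Sum>i = 1..k. (p (i + 1) - p i) * (F k * p i / (1 - p i)))"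
    by (simp add: PP_def sum_distrib_left algebra_simps)
  also have "\<dots> \<le> (\<Sum>i = 1..k. (p (i + 1) - p i) * (F i * p i / (1 - p i)))"
  proof (rule sum_mono)
    fix i assume i: "i \<in> {1..k}"
    then have "F k * p i / (1 - p i) \<le> F i * p i / (1 - p i)"
      using k F_antimono[of i k] p_nonneg[of i] p_less_1[of i]
      by (intro divide_right_mono mult_right_mono) auto
    then show "(p (i + 1) - p i) * (F k * p i / (1 - p i))
        \<le> (p (i + 1) - p i) * (F i * p i / (1 - p i))"
      using i k p_step[of i] by (intro mult_left_mono) auto
  qed
  also have "\<dots> \<le> fp_penalty"
    unfolding fp_penalty_def
  proof (rule sum_mono2)
    show "0 \<le> (p (i + 1) - p i) * (F i * p i / (1 - p i))" if "i \<in> {0..M} - {1..k}" for i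
      using that p_step[of i] p_nonneg[of i] p_less_1[of i] F_nonneg[of i]
      by (intro mult_nonneg_nonneg divide_nonneg_nonneg) auto
  qed (use k in auto)
  finally show ?thesis .
qed

lemma misranked_pairs_le_ratio:
  assumes "1 \<le> M"
  obtains k where "k \<in> {1..M}" "misranked_pairs \<le> F k / (1 - p k) * tp_loss"
proof (rule sum_mult_le_max_ratio[of "{1..M}" "\<lambda>k. 1 - p k" "\<lambda>k. T (k - 1) - T k" F])
  show "0 < 1 - p k" if "k \<in> {1..M}" for k
    using that p_less_1[of k] by simp
qed (use assms T_decrement_nonneg that[unfolded misranked_pairs_def tp_loss_def] in auto)

theorem Min_Bk_le_auroc:
  assumes "1 \<le> M"
  shows "Min ((\<lambda>k. Bk p k aunbc (np / (np + nn))) ` {1..M}) \<le> auroc"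
proof -
  obtain k where k: "k \<in> {1..M}" and ratio: "misranked_pairs \<le> F k / (1 - p k) * tp_loss"
    using misranked_pairs_le_ratio assms by blast
  define a where "a = np / (np + nn)"
  define u where "u = tp_loss / (np * (1 - p k))"
  define f where "f = F k / nn"
  have pk: "0 < 1 - p k"
    using k p_less_1[of k] by simp
  have a: "0 < a" "1 - a = nn / (np + nn)"
    using np_pos nn_pos by (simp_all add: a_def field_simps)
  have "misranked_pairs / (np * nn) \<le> F k / (1 - p k) * tp_loss / (np * nn)"
    using ratio np_pos nn_pos by (intro divide_right_mono) auto
  also have "\<dots> = u * f"
    by (simp add: u_def f_def mult_ac)
  also have "\<dots> \<le> product_bound (a * (1 - p k)) ((1 - a) * PP p k) (a - aunbc)"
  proof (rule mult_le_product_bound)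
    show "0 < a * (1 - p k)" "0 < (1 - a) * PP p k" "0 \<le> u" "0 \<le> f" "f \<le> 1"
      using a pk k PP_pos[of k] np_pos nn_pos tp_loss_nonneg F_nonneg[of k]
        F_antimono[of 0 k] F_0 by (auto simp: u_def f_def)
    have "a * (1 - p k) * u = tp_loss / (np + nn)"
      using pk np_pos by (simp add: a_def u_def)
    moreover have "(1 - a) * PP p k * f = F k * PP p k / (np + nn)"
      using nn_pos by (simp add: a(2) f_def)
    ultimately have "a * (1 - p k) * u + (1 - a) * PP p k * f
        = (tp_loss + F k * PP p k) / (np + nn)"
      by (simp add: add_divide_distrib)
    also have "\<dots> \<le> a - aunbc"
      using fp_penalty_ge[OF k] np_pos nn_pos
      by (simp add: a_def aunbc_eq divide_right_mono diff_divide_distrib[symmetric])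
    finally show "a * (1 - p k) * u + (1 - a) * PP p k * f \<le> a - aunbc" .
  qed
  finally have "Bk p k aunbc a \<le> auroc"
    by (simp add: Bk_eq_product_bound auroc_eq)
  moreover have "Min ((\<lambda>k. Bk p k aunbc a) ` {1..M}) \<le> Bk p k aunbc a"
    using k by (intro Min_le) auto
  ultimately show ?thesis
    unfolding a_def by linarith
qed

end

theorem corollary1:
  fixes M N :: nat and p :: "nat \<Rightarrow> real" and x :: "nat \<Rightarrow> 'a"
    and y :: "nat \<Rightarrow> nat" and c :: "'a \<Rightarrow> real"
  assumes "M \<ge> 1"
    and "p 0 = 0" and "p (M + 1) = 1"
    and "\<And>i. i \<le> M \<Longrightarrow> p i < p (i + 1)"
    and "\<And>j. j < N \<Longrightarrow> y j \<in> {0, 1}"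
    and "npos N y \<ge> 1" and "nneg N y \<ge> 1"
    and "\<And>j. j < N \<Longrightarrow> c (x j) \<in> {0..1}"
  shows "1 \<ge> AUROC M p c x y N \<and>
         AUROC M p c x y N \<ge>
           max (Min ((\<lambda>k. Bk p k (AUNBC M p c x y N) (a0 N y)) ` {1..M})) 0"
proof -
  interpret threshold_grid M p
    using assms(2-4) by unfold_locales
  have scores: "\<And>j. j < N \<Longrightarrow> 0 \<le> c (x j)"
    using assms(8) by simp
  interpret roc_counts M p "TP M p c x y N" "FP M p c x y N" "npos N y" "nneg N y"
  proof unfold_locales
    show "TP M p c x y N 0 = npos N y" "FP M p c x y N 0 = nneg N y"
      using TP_0[of p N c x, OF assms(2) scores] FP_0[of p N c x, OF assms(2) scores]
      by simp_all
  qed (simp_all add: TP_antimono FP_antimono,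
      use assms(6,7) in \<open>simp_all add: TP_def FP_def\<close>)
  have N: "real N = real (npos N y) + real (nneg N y)"
    using npos_add_nneg[of N y, OF assms(5)] by simp
  have AUROC: "AUROC M p c x y N = auroc"
    by (simp add: AUROC_def auroc_def)
  have AUNBC: "AUNBC M p c x y N = aunbc"
    and a0: "a0 N y = real (npos N y) / (real (npos N y) + real (nneg N y))"
    by (simp_all add: AUNBC_def aunbc_def a0_def N)
  show ?thesis
    unfolding AUROC AUNBC a0 using Min_Bk_le_auroc[OF assms(1)] auroc_bounds by linarith
qed

end
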